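(* Let $m$ be a positive integer, $n=2^m$, and let the dihedral group $D_n=\langle r,f\mid r^n=f^2=1,\ frf=r^{-1}\rangle$ act on $\{0,\dots,n-1\}$ by $r\cdot i=i+1 \bmod n$ and $f\cdot i=-i \bmod n$ (the symmetries of the vertices of a regular $n$-gon). Let $W:D_n\to U(\mathbb{C}^{2^m}\otimes\mathbb{C}^2)$ be the unitary representation $W(\sigma)\lvert i\rangle\otimes\lvert\alpha\rangle=\lvert\sigma\cdot i\rangle\otimes\lvert\alpha\rangle$ for $i\in\{0,\dots,n-1\}$, $\alpha\in\{0,1\}$. Let $D=\mathrm{diag}(e^{i\theta_0},\dots,e^{i\theta_{2^m-1}})$ acting on $\mathbb{C}^{2^m}$, with pairwise distinct phases $e^{i\theta_j}$. Let $\mathcal{Q}$ be the subgroup of $U(\mathbb{C}^{2^m}\otimes\mathbb{C}^2)$ generated by $\pm iI$, $I\otimes X$, $I\otimes Z$, $W(D_n)$ and $D\otimes I$, where $X,Z$ are the Pauli matrices on $\mathbb{C}^2$. Then every element of $U(\mathbb{C}^{2^m}\otimes\mathbb{C}^2)$ can be written as a complex linear combination of elements of $\mathcal{Q}$. *)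

theory Defs
  imports "Jordan_Normal_Form.Schur_Decomposition"
begin

(* Basis convention: |i> \<otimes> |alpha> of C^(2^m) \<otimes> C^2 is the standard basis
   vector e_(2*i + alpha) of C^(2^(m+1)); so i = k div 2, alpha = k mod 2. *)

definition unitary_mat :: "nat \<Rightarrow> complex mat \<Rightarrow> bool" where
  "unitary_mat N U \<longleftrightarrow> U \<in> carrier_mat N N \<and> U * mat_adjoint U = 1\<^sub>m N"

definition rot :: "nat \<Rightarrow> nat \<Rightarrow> nat" where
  "rot n i = (i + 1) mod n"

definition flip :: "nat \<Rightarrow> nat \<Rightarrow> nat" where
  "flip n i = nat ((- int i) mod int n)"

(* the image of D_n = <r,f> acting on {0..n-1}: generated by rot and flip *)
inductive_set dihedral_action :: "nat \<Rightarrow> (nat \<Rightarrow> nat) set" for n where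
  id: "id \<in> dihedral_action n"
| rot: "\<sigma> \<in> dihedral_action n \<Longrightarrow> rot n \<circ> \<sigma> \<in> dihedral_action n"
| flip: "\<sigma> \<in> dihedral_action n \<Longrightarrow> flip n \<circ> \<sigma> \<in> dihedral_action n"

definition W_rep :: "nat \<Rightarrow> (nat \<Rightarrow> nat) \<Rightarrow> complex mat" where
  "W_rep m \<sigma> = mat (2^(m+1)) (2^(m+1))
     (\<lambda>(a,b). if a div 2 = \<sigma> (b div 2) \<and> a mod 2 = b mod 2 then 1 else 0)"

definition IX :: "nat \<Rightarrow> complex mat" where
  "IX m = mat (2^(m+1)) (2^(m+1))
     (\<lambda>(a,b). if a div 2 = b div 2 \<and> a mod 2 \<noteq> b mod 2 then 1 else 0)"

definition IZ :: "nat \<Rightarrow> complex mat" where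
  "IZ m = mat (2^(m+1)) (2^(m+1))
     (\<lambda>(a,b). if a = b then (if a mod 2 = 0 then 1 else -1) else 0)"

definition DI :: "nat \<Rightarrow> (nat \<Rightarrow> real) \<Rightarrow> complex mat" where
  "DI m \<theta> = mat (2^(m+1)) (2^(m+1))
     (\<lambda>(a,b). if a = b then exp (\<i> * complex_of_real (\<theta> (a div 2))) else 0)"

inductive_set gen_subgroup :: "nat \<Rightarrow> complex mat set \<Rightarrow> complex mat set" for N G where
  one: "1\<^sub>m N \<in> gen_subgroup N G"
| gen: "A \<in> G \<Longrightarrow> A \<in> gen_subgroup N G"
| mult: "A \<in> gen_subgroup N G \<Longrightarrow> B \<in> gen_subgroup N G \<Longrightarrow> A * B \<in> gen_subgroup N G"
| inv: "A \<in> gen_subgroup N G \<Longrightarrow> mat_adjoint A \<in> gen_subgroup N G"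

inductive_set lin_span :: "nat \<Rightarrow> complex mat set \<Rightarrow> complex mat set" for N S where
  zero: "0\<^sub>m N N \<in> lin_span N S"
| elem: "A \<in> S \<Longrightarrow> A \<in> lin_span N S"
| add: "A \<in> lin_span N S \<Longrightarrow> B \<in> lin_span N S \<Longrightarrow> A + B \<in> lin_span N S"
| smult: "A \<in> lin_span N S \<Longrightarrow> c \<cdot>\<^sub>m A \<in> lin_span N S"

definition Q_group :: "nat \<Rightarrow> (nat \<Rightarrow> real) \<Rightarrow> complex mat set" where
  "Q_group m \<theta> = gen_subgroup (2^(m+1))
     ({\<i> \<cdot>\<^sub>m 1\<^sub>m (2^(m+1)), (-\<i>) \<cdot>\<^sub>m 1\<^sub>m (2^(m+1)), IX m, IZ m, DI m \<theta>}
      \<union> W_rep m ` dihedral_action (2^m))"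

end

theory Submission
  imports Defs
begin

(* The linear span of a matrix group is an algebra. Polynomials in the diagonal generators
   D \<otimes> I and I \<otimes> Z interpolate the projectors onto their joint eigenspaces, and since the
   phases of D are distinct these are exactly the diagonal matrix units |b><b|. Multiplying by
   I \<otimes> X and by rotations W(r^k), which act transitively on the vertices, gives every matrix
   unit |a><b|, and these span all matrices. *)

definition matrix_unit :: "nat \<Rightarrow> nat \<Rightarrow> nat \<Rightarrow> complex mat" where
  "matrix_unit N a b = mat N N (\<lambda>(i, j). if i = a \<and> j = b then 1 else 0)"

lemma mat_diag_cong: "(\<And>i. i < N \<Longrightarrow> f i = g i) \<Longrightarrow> mat_diag N f = mat_diag N g"
  by (rule eq_matI) (auto simp: mat_diag_def)

lemma mat_diag_add:
  fixes f g :: "nat \<Rightarrow> complex"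
  shows "mat_diag N f + mat_diag N g = mat_diag N (\<lambda>i. f i + g i)"
  by (rule eq_matI) (auto simp: mat_diag_def)

lemma mat_diag_smult:
  fixes f :: "nat \<Rightarrow> complex"
  shows "c \<cdot>\<^sub>m mat_diag N f = mat_diag N (\<lambda>i. c * f i)"
  by (rule eq_matI) (auto simp: mat_diag_def)

lemma mat_diag_zero: "mat_diag N (\<lambda>_. 0) = 0\<^sub>m N N"
  by (rule eq_matI) (auto simp: mat_diag_def)

lemma mat_diag_indicator: "mat_diag N (\<lambda>i. if i = a then 1 else 0) = matrix_unit N a a"
  by (rule eq_matI) (auto simp: mat_diag_def matrix_unit_def)

lemma mult_matrix_unit_basis_col:
  assumes A: "A \<in> carrier_mat N N" and x: "x < N"
    and col: "\<And>i. i < N \<Longrightarrow> A $$ (i, x) = (if i = a then 1 else 0)"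
  shows "A * matrix_unit N x b = matrix_unit N a b"
proof (rule eq_matI)
  fix i j assume "i < dim_row (matrix_unit N a b)" "j < dim_col (matrix_unit N a b)"
  hence i: "i < N" and j: "j < N" by (auto simp: matrix_unit_def)
  have "(A * matrix_unit N x b) $$ (i, j) = (\<Sum>l<N. A $$ (i, l) * (if l = x \<and> j = b then 1 else 0))"
    using i j A by (simp add: matrix_unit_def scalar_prod_def atLeast0LessThan)
  also have "\<dots> = A $$ (i, x) * (if j = b then 1 else 0)"
    using x by (simp add: if_distrib[of "(*) _"] sum.delta' cong: if_cong)
  finally show "(A * matrix_unit N x b) $$ (i, j) = matrix_unit N a b $$ (i, j)"
    using i j col by (simp add: matrix_unit_def)
qed (use A in \<open>auto simp: matrix_unit_def\<close>)

lemma lin_span_carrier: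
  assumes "S \<subseteq> carrier_mat N N"
  shows "lin_span N S \<subseteq> carrier_mat N N"
proof
  fix A assume "A \<in> lin_span N S"
  then show "A \<in> carrier_mat N N" by (induction rule: lin_span.induct) (use assms in auto)
qed

lemma carrier_mat_subset_lin_span:
  assumes units: "\<And>a b. a < N \<Longrightarrow> b < N \<Longrightarrow> matrix_unit N a b \<in> lin_span N S"
  shows "carrier_mat N N \<subseteq> lin_span N S"
proof
  fix A :: "complex mat" assume A: "A \<in> carrier_mat N N"
  have partial: "mat N N (\<lambda>p. if p \<in> P then A $$ p else 0) \<in> lin_span N S"
    if "finite P" "P \<subseteq> {..<N} \<times> {..<N}" for P
    using that
  proof (induction P rule: finite_induct)
    case empty
    have "mat N N (\<lambda>p. if p \<in> {} then A $$ p else 0) = 0\<^sub>m N N" by (rule eq_matI) auto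
    then show ?case by (simp add: lin_span.zero)
  next
    case (insert p P)
    obtain a b where p: "p = (a, b)" by fastforce
    with insert.prems have "a < N" "b < N" by auto
    then have "A $$ (a, b) \<cdot>\<^sub>m matrix_unit N a b + mat N N (\<lambda>q. if q \<in> P then A $$ q else 0)
        \<in> lin_span N S"
      using insert by (intro lin_span.add lin_span.smult units) auto
    moreover have "A $$ (a, b) \<cdot>\<^sub>m matrix_unit N a b + mat N N (\<lambda>q. if q \<in> P then A $$ q else 0)
        = mat N N (\<lambda>q. if q \<in> insert p P then A $$ q else 0)"
      by (rule eq_matI) (use insert.hyps p in \<open>auto simp: matrix_unit_def\<close>)
    ultimately show ?case by simp
  qed
  have "mat N N (\<lambda>p. if p \<in> {..<N} \<times> {..<N} then A $$ p else 0) = A"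
    by (rule eq_matI) (use A in auto)
  with partial[of "{..<N} \<times> {..<N}"] show "A \<in> lin_span N S" by simp
qed

locale matrix_monoid =
  fixes N :: nat and S :: "complex mat set"
  assumes carrier: "S \<subseteq> carrier_mat N N"
    and one_mem: "1\<^sub>m N \<in> S"
    and mult_mem: "\<And>A B. A \<in> S \<Longrightarrow> B \<in> S \<Longrightarrow> A * B \<in> S"
begin

lemma span_carrier: "A \<in> lin_span N S \<Longrightarrow> A \<in> carrier_mat N N"
  using lin_span_carrier[OF carrier] by blast

lemma span_mult_left:
  assumes A: "A \<in> S" and B: "B \<in> lin_span N S"
  shows "A * B \<in> lin_span N S"
  using B
proof (induction rule: lin_span.induct)
  case zero
  have "A * 0\<^sub>m N N = 0\<^sub>m N N" using A carrier by auto
  then show ?case by (simp add: lin_span.zero)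
next
  case (elem B)
  then show ?case using A by (intro lin_span.elem mult_mem)
next
  case (add B C)
  have "A * (B + C) = A * B + A * C"
    using A carrier span_carrier[OF add.hyps(1)] span_carrier[OF add.hyps(2)]
    by (auto simp: mult_add_distrib_mat)
  then show ?case using add.IH by (simp add: lin_span.add)
next
  case (smult B c)
  have "A * (c \<cdot>\<^sub>m B) = c \<cdot>\<^sub>m (A * B)"
    using A carrier span_carrier[OF smult.hyps] by (auto simp: mult_smult_distrib)
  then show ?case using smult.IH by (simp add: lin_span.smult)
qed

lemma span_mult:
  assumes A: "A \<in> lin_span N S" and B: "B \<in> lin_span N S"
  shows "A * B \<in> lin_span N S"
  using A
proof (induction rule: lin_span.induct)
  case zero
  have "0\<^sub>m N N * B = 0\<^sub>m N N" using span_carrier[OF B] by simp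
  then show ?case by (simp add: lin_span.zero)
next
  case (elem A)
  then show ?case using B by (rule span_mult_left)
next
  case (add A C)
  have "(A + C) * B = A * B + C * B"
    using span_carrier[OF B] span_carrier[OF add.hyps(1)] span_carrier[OF add.hyps(2)]
    by (simp add: add_mult_distrib_mat)
  then show ?case using add.IH by (simp add: lin_span.add)
next
  case (smult A c)
  have "(c \<cdot>\<^sub>m A) * B = c \<cdot>\<^sub>m (A * B)"
    using span_carrier[OF B] span_carrier[OF smult.hyps] by (simp add: mult_smult_assoc_mat)
  then show ?case using smult.IH by (simp add: lin_span.smult)
qed

lemma mat_diag_const_mem_span: "mat_diag N (\<lambda>_. c) \<in> lin_span N S"
proof -
  have "c \<cdot>\<^sub>m 1\<^sub>m N \<in> lin_span N S" using one_mem by (intro lin_span.smult lin_span.elem)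
  then show ?thesis by (simp add: mat_diag_smult flip: mat_diag_one)
qed

lemma mat_diag_poly_mem_span:
  assumes g: "mat_diag N g \<in> lin_span N S"
  shows "mat_diag N (\<lambda>i. poly p (g i)) \<in> lin_span N S"
proof (induction p)
  case 0
  then show ?case using lin_span.zero by (simp add: mat_diag_zero)
next
  case (pCons a p)
  have "mat_diag N (\<lambda>_. a) + mat_diag N g * mat_diag N (\<lambda>i. poly p (g i)) \<in> lin_span N S"
    using g pCons.IH by (intro lin_span.add mat_diag_const_mem_span span_mult)
  then show ?case by (simp add: mat_diag_add)
qed

lemma mat_diag_level_set_mem_span:
  assumes g: "mat_diag N g \<in> lin_span N S"
  shows "mat_diag N (\<lambda>i. if g i = c then 1 else 0) \<in> lin_span N S"
proof -
  define V where "V = g ` {..<N} - {c}"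
  define p where "p = smult (1 / (\<Prod>v\<in>V. c - v)) (\<Prod>v\<in>V. [:- v, 1:])"
  have "poly p (g i) = (if g i = c then 1 else 0)" if "i < N" for i
  proof (cases "g i = c")
    case True
    have "(\<Prod>v\<in>V. c - v) \<noteq> 0" by (simp add: V_def)
    with True show ?thesis by (simp add: p_def poly_prod)
  next
    case False
    with that have "g i \<in> V" "finite V" by (auto simp: V_def)
    with False show ?thesis by (auto simp: p_def poly_prod prod_zero_iff)
  qed
  then have "mat_diag N (\<lambda>i. poly p (g i)) = mat_diag N (\<lambda>i. if g i = c then 1 else 0)"
    by (rule mat_diag_cong)
  with mat_diag_poly_mem_span[OF g, of p] show ?thesis by simp
qed

end

lemma gen_subgroup_carrier:
  assumes "G \<subseteq> carrier_mat N N"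
  shows "gen_subgroup N G \<subseteq> carrier_mat N N"
proof
  fix A assume "A \<in> gen_subgroup N G"
  then show "A \<in> carrier_mat N N"
    by (induction rule: gen_subgroup.induct) (use assms in \<open>auto simp: mat_adjoint_def\<close>)
qed

lemma matrix_monoid_gen_subgroup: "G \<subseteq> carrier_mat N N \<Longrightarrow> matrix_monoid N (gen_subgroup N G)"
  by unfold_locales (auto intro: gen_subgroup.intros dest: gen_subgroup_carrier)

lemma funpow_rot: "i < n \<Longrightarrow> (rot n ^^ k) i = (i + k) mod n"
  by (induction k) (auto simp: rot_def mod_Suc_eq)

lemma funpow_rot_mem_dihedral_action: "rot n ^^ k \<in> dihedral_action n"
proof (induction k)
  case 0
  then show ?case using dihedral_action.id by (simp add: id_def)
next
  case (Suc k)
  then show ?case using dihedral_action.rot[OF Suc.IH] by (simp add: comp_def)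
qed

lemma dihedral_action_transitive:
  assumes "i < n" "j < n"
  obtains \<sigma> where "\<sigma> \<in> dihedral_action n" "\<sigma> i = j"
proof
  show "rot n ^^ (j + n - i) \<in> dihedral_action n" by (rule funpow_rot_mem_dihedral_action)
  show "(rot n ^^ (j + n - i)) i = j" using assms by (simp add: funpow_rot)
qed

interpretation Q: matrix_monoid "2^(m+1)" "Q_group m \<theta>"
  unfolding Q_group_def
  by (rule matrix_monoid_gen_subgroup) (auto simp: IX_def IZ_def DI_def W_rep_def)

lemma generator_mem_span_Q_group:
  assumes "A \<in> {IX m, IZ m, DI m \<theta>} \<union> W_rep m ` dihedral_action (2^m)"
  shows "A \<in> lin_span (2^(m+1)) (Q_group m \<theta>)"
  unfolding Q_group_def by (intro lin_span.elem gen_subgroup.gen) (use assms in blast)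

lemma IZ_eq_mat_diag: "IZ m = mat_diag (2^(m+1)) (\<lambda>i. if even i then 1 else -1)"
  by (rule eq_matI) (auto simp: IZ_def mat_diag_def)

lemma DI_eq_mat_diag:
  "DI m \<theta> = mat_diag (2^(m+1)) (\<lambda>i. exp (\<i> * complex_of_real (\<theta> (i div 2))))"
  by (rule eq_matI) (auto simp: DI_def mat_diag_def)

lemma IX_col:
  assumes "i < 2^(m+1)" "b < 2^(m+1)" "a div 2 = b div 2" "a mod 2 \<noteq> b mod 2"
  shows "IX m $$ (i, b) = (if i = a then 1 else 0)"
  using assms by (auto simp: IX_def) (metis div_mult_mod_eq mod2_eq_if)

lemma W_rep_col:
  assumes "i < 2^(m+1)" "b < 2^(m+1)" "\<sigma> (b div 2) = a div 2" "a mod 2 = b mod 2"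
  shows "W_rep m \<sigma> $$ (i, b) = (if i = a then 1 else 0)"
  using assms by (auto simp: W_rep_def) (metis div_mult_mod_eq)

lemma diagonal_matrix_unit_mem_span_Q_group:
  assumes dist: "\<forall>j < 2^m. \<forall>k < 2^m. j \<noteq> k \<longrightarrow>
           exp (\<i> * complex_of_real (\<theta> j)) \<noteq> exp (\<i> * complex_of_real (\<theta> k))"
    and b: "b < 2^(m+1)"
  shows "matrix_unit (2^(m+1)) b b \<in> lin_span (2^(m+1)) (Q_group m \<theta>)"
proof -
  define d where "d i = exp (\<i> * complex_of_real (\<theta> (i div 2)))" for i
  define s :: "nat \<Rightarrow> complex" where "s i = (if even i then 1 else -1)" for i
  have "mat_diag (2^(m+1)) (\<lambda>i. if d i = d b then 1 else 0)
        * mat_diag (2^(m+1)) (\<lambda>i. if s i = s b then 1 else 0) \<in> lin_span (2^(m+1)) (Q_group m \<theta>)"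
    using generator_mem_span_Q_group[of "DI m \<theta>"] generator_mem_span_Q_group[of "IZ m"]
    by (intro Q.span_mult Q.mat_diag_level_set_mem_span)
       (auto simp: DI_eq_mat_diag IZ_eq_mat_diag d_def s_def)
  moreover have "(d i = d b \<and> s i = s b) \<longleftrightarrow> i = b" if "i < 2^(m+1)" for i
  proof -
    have "i div 2 < 2^m" "b div 2 < 2^m" using that b by (simp_all add: less_mult_imp_div_less)
    then have "d i = d b \<longleftrightarrow> i div 2 = b div 2" using dist by (auto simp: d_def)
    moreover have "s i = s b \<longleftrightarrow> i mod 2 = b mod 2"
      by (cases "even i"; cases "even b") (auto simp: s_def odd_iff_mod_2_eq_one even_iff_mod_2_eq_zero)
    ultimately show ?thesis by (metis div_mult_mod_eq)
  qed
  then have "mat_diag (2^(m+1)) (\<lambda>i. (if d i = d b then 1 else 0) * (if s i = s b then 1 else 0))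
      = matrix_unit (2^(m+1)) b b"
    unfolding mat_diag_indicator[symmetric] by (intro mat_diag_cong) auto
  ultimately show ?thesis by simp
qed

lemma matrix_unit_mem_span_Q_group:
  assumes dist: "\<forall>j < 2^m. \<forall>k < 2^m. j \<noteq> k \<longrightarrow>
           exp (\<i> * complex_of_real (\<theta> j)) \<noteq> exp (\<i> * complex_of_real (\<theta> k))"
    and a: "a < 2^(m+1)" and b: "b < 2^(m+1)"
  shows "matrix_unit (2^(m+1)) a b \<in> lin_span (2^(m+1)) (Q_group m \<theta>)"
proof -
  let ?N = "2^(m+1) :: nat"
  have "b div 2 < 2^m" "a div 2 < 2^m" using a b by (simp_all add: less_mult_imp_div_less)
  then obtain \<sigma> where \<sigma>: "\<sigma> \<in> dihedral_action (2^m)" "\<sigma> (b div 2) = a div 2"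
    by (rule dihedral_action_transitive)
  define x where "x = 2 * (a div 2) + b mod 2"
  have x: "x < ?N" "x div 2 = a div 2" "x mod 2 = b mod 2"
    using \<open>a div 2 < 2^m\<close> by (auto simp: x_def)
  have "W_rep m \<sigma> * matrix_unit ?N b b \<in> lin_span ?N (Q_group m \<theta>)"
    using \<sigma> by (intro Q.span_mult generator_mem_span_Q_group
        diagonal_matrix_unit_mem_span_Q_group[OF dist b]) blast
  moreover have "W_rep m \<sigma> * matrix_unit ?N b b = matrix_unit ?N x b"
    using b x \<sigma> by (intro mult_matrix_unit_basis_col W_rep_col) (auto simp: W_rep_def)
  ultimately have Ex: "matrix_unit ?N x b \<in> lin_span ?N (Q_group m \<theta>)" by simp
  show ?thesis
  proof (cases "a mod 2 = b mod 2")
    case True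
    then have "x = a" using x by (metis div_mult_mod_eq)
    with Ex show ?thesis by simp
  next
    case False
    have "IX m * matrix_unit ?N x b \<in> lin_span ?N (Q_group m \<theta>)"
      by (intro Q.span_mult generator_mem_span_Q_group Ex) blast
    moreover have "IX m * matrix_unit ?N x b = matrix_unit ?N a b"
      using False x by (intro mult_matrix_unit_basis_col IX_col) (auto simp: IX_def)
    ultimately show ?thesis by simp
  qed
qed

theorem proposition4:
  fixes m :: nat and \<theta> :: "nat \<Rightarrow> real" and U :: "complex mat"
  assumes "m \<ge> 1"
    and "\<forall>j < 2^m. \<forall>k < 2^m. j \<noteq> k \<longrightarrow>
           exp (\<i> * complex_of_real (\<theta> j)) \<noteq> exp (\<i> * complex_of_real (\<theta> k))"
    and "unitary_mat (2^(m+1)) U"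
  shows "U \<in> lin_span (2^(m+1)) (Q_group m \<theta>)"
proof -
  have "carrier_mat (2^(m+1)) (2^(m+1)) \<subseteq> lin_span (2^(m+1)) (Q_group m \<theta>)"
    using matrix_unit_mem_span_Q_group[OF assms(2)] by (rule carrier_mat_subset_lin_span)
  with assms(3) show ?thesis unfolding unitary_mat_def by blast
qed

end
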